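(* Let $q \ge 2$, $n$ and $t$ be positive integers with $t \le 10\sqrt{n}$. For every integer $k\ge 0$ with $2k+2\le n$, \[ W_q(n,t, 2k+2) \leq W_q(n,t, 2k+1) \le 2\left(\frac{q^2t}{(q-1)n}\right)^{k} W_q(n,t,1) \le 2\left(\frac{q^2t}{(q-1)n}\right)^{k+1}V_q(n,t). \]
   Context: $V_q(m,r) = \sum_{j=0}^{r}\binom{m}{j}(q-1)^j$ (with $V_q(m,r)=0$ for $r<0$). For $x\in[q]^n$, $B_q(x,r)=\{y\in[q]^n : d(x,y)\le r\}$, where $d$ is the Hamming distance. For $0\le k\le n$, $W_q(n,t,k)$ denotes $|B_q(x,t)\cap B_q(y,t)|$ for any $x,y\in[q]^n$ with $d(x,y)=k$ (this does not depend on the choice of $x,y$). *)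

theory Defs
  imports Complex_Main "HOL-Library.FuncSet"
begin

definition hamming_space :: "nat \<Rightarrow> nat \<Rightarrow> (nat \<Rightarrow> nat) set" where
  "hamming_space q n = PiE {0..<n} (\<lambda>_. {0..<q})"

definition hdist :: "nat \<Rightarrow> (nat \<Rightarrow> nat) \<Rightarrow> (nat \<Rightarrow> nat) \<Rightarrow> nat" where
  "hdist n x y = card {i \<in> {0..<n}. x i \<noteq> y i}"

definition hball :: "nat \<Rightarrow> nat \<Rightarrow> (nat \<Rightarrow> nat) \<Rightarrow> nat \<Rightarrow> (nat \<Rightarrow> nat) set" where
  "hball q n x r = {y \<in> hamming_space q n. hdist n x y \<le> r}"

definition Vq :: "nat \<Rightarrow> nat \<Rightarrow> int \<Rightarrow> nat" where
  "Vq q m r = (if r < 0 then 0 else (\<Sum>j\<le>nat r. (m choose j) * (q - 1) ^ j))"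

text \<open>W_q(n,t,k) = |B(x,t) \<inter> B(y,t)| for d(x,y)=k; by symmetry we take the canonical
  pair x = 0...0 and y = 1^k 0^(n-k).\<close>
definition Wq :: "nat \<Rightarrow> nat \<Rightarrow> nat \<Rightarrow> nat \<Rightarrow> nat" where
  "Wq q n t k = card (hball q n (\<lambda>i. if i < n then 0 else undefined) t
                      \<inter> hball q n (\<lambda>i. if i < k then 1 else if i < n then 0 else undefined) t)"

end

theory Submission
  imports Defs
begin

text \<open>Take the centres 0^n and 1^d 0^(n-d). Resetting coordinate d to 0 maps the words lying in
  the intersection for distance d + 1 but not for d injectively into the opposite difference, so
  W_q(n,t,d) is non-increasing in d. On the first d coordinates a word is at total distance at
  least d from the two centres, so for d = 2k + 1 its last n - d coordinates lie in the ball of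
  radius t - k - 1 around 0; hence W_q(n,t,2k+1) <= q^(2k+1) V_q(n-2k-1,t-k-1), while
  W_q(n,t,1) = q V_q(n-1,t-1). Comparing the volume sums term by term gives
  ((q-1)n)^k V_q(n-2k-1,t-k-1) <= t^k V_q(n-1,t-1) and (q-1)n V_q(n-1,t-1) <= t V_q(n,t),
  which yields the bounds with ratio q^2 t / ((q-1)n).\<close>

text \<open>Words are handled as lists, which supports induction on the length; \<open>fun_of_word\<close> transfers
  results to the function encoding of \<open>hamming_space\<close>.\<close>

definition words :: "nat \<Rightarrow> nat \<Rightarrow> nat list set" where
  "words q m = {xs. length xs = m \<and> set xs \<subseteq> {0..<q}}"

fun ldist :: "nat list \<Rightarrow> nat list \<Rightarrow> nat" where
  "ldist (a # xs) (b # ys) = (if a = b then 0 else 1) + ldist xs ys"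
| "ldist _ _ = 0"

lemma finite_words: "finite (words q m)"
  using finite_lists_length_eq[of "{0..<q}" m] unfolding words_def by (simp add: conj_commute)

lemma card_words: "card (words q m) = q ^ m"
  using card_lists_length_eq[of "{0..<q}" m] unfolding words_def by (simp add: conj_commute)

lemma words_Suc: "words q (Suc m) = (\<lambda>(a, xs). a # xs) ` ({0..<q} \<times> words q m)"
  unfolding words_def by (auto simp: image_iff length_Suc_conv)

lemma ldist_sym: "ldist xs ys = ldist ys xs"
  by (induction xs ys rule: ldist.induct) auto

lemma ldist_append:
  "length xs = length us \<Longrightarrow> ldist (xs @ ys) (us @ vs) = ldist xs us + ldist ys vs"
  by (induction xs us rule: ldist.induct) auto

lemma ldist_list_update:
  assumes "i < length xs" "length xs = length ys"
  shows "ldist (xs[i := a]) ys + (if xs ! i = ys ! i then 0 else 1)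
       = ldist xs ys + (if a = ys ! i then 0 else 1)"
  using assms
proof (induction xs arbitrary: i ys)
  case (Cons x xs)
  then obtain y ys' where "ys = y # ys'" by (cases ys) auto
  with Cons show ?case by (cases i) auto
qed simp

lemma ldist_eq_card:
  "length xs = length ys \<Longrightarrow> ldist xs ys = card {i. i < length xs \<and> xs ! i \<noteq> ys ! i}"
proof (induction xs ys rule: ldist.induct)
  case (1 a xs b ys)
  have "{i. i < length (a # xs) \<and> (a # xs) ! i \<noteq> (b # ys) ! i}
      = (if a = b then {} else {0}) \<union> Suc ` {i. i < length xs \<and> xs ! i \<noteq> ys ! i}"
  proof (intro set_eqI iffI)
    fix i assume "i \<in> {i. i < length (a # xs) \<and> (a # xs) ! i \<noteq> (b # ys) ! i}"
    then show "i \<in> (if a = b then {} else {0}) \<union> Suc ` {i. i < length xs \<and> xs ! i \<noteq> ys ! i}"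
      by (cases i) auto
  qed (auto split: if_splits)
  with 1 show ?case by (simp add: card_image card_insert_if)
qed auto

lemma ldist_zeros_ones_ge: "length us = d \<Longrightarrow> d \<le> ldist (replicate d 0) us + ldist (replicate d 1) us"
  by (induction us arbitrary: d) auto

lemma card_sphere_words:
  assumes "q \<ge> 1"
  shows "card {xs \<in> words q m. ldist (replicate m 0) xs = j} = (m choose j) * (q - 1) ^ j"
proof (induction m arbitrary: j)
  case 0
  have "{xs \<in> words q 0. ldist [] xs = j} = (if j = 0 then {[]} else {})"
    by (auto simp: words_def)
  then show ?case by simp
next
  case (Suc m)
  let ?S = "\<lambda>j. {xs \<in> words q m. ldist (replicate m 0) xs = j}"
  show ?case
  proof (cases j)
    case 0
    have "{xs \<in> words q (Suc m). ldist (replicate (Suc m) 0) xs = j} = Cons 0 ` ?S 0"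
      using 0 assms by (auto simp: words_Suc image_iff split: if_splits)
    then show ?thesis using Suc.IH[of 0] 0 by (simp add: card_image)
  next
    case (Suc j')
    have sphere_Suc: "{xs \<in> words q (Suc m). ldist (replicate (Suc m) 0) xs = j}
        = Cons 0 ` ?S j \<union> (\<lambda>(a, xs). a # xs) ` ({1..<q} \<times> ?S j')"
      using Suc assms by (auto simp: words_Suc image_iff split: if_splits)
    have "inj_on (\<lambda>(a, xs). a # xs) ({1..<q} \<times> ?S j')"
      by (auto simp: inj_on_def)
    then have "card {xs \<in> words q (Suc m). ldist (replicate (Suc m) 0) xs = j}
        = card (?S j) + (q - 1) * card (?S j')"
      unfolding sphere_Suc
      by (subst card_Un_disjoint) (auto simp: finite_words card_image card_cartesian_product)
    also have "\<dots> = (Suc m choose j) * (q - 1) ^ j"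
    proof -
      have "(m choose Suc j') * p ^ Suc j' + p * ((m choose j') * p ^ j')
          = (Suc m choose Suc j') * p ^ Suc j'" for p :: nat
        by (simp add: algebra_simps)
      then show ?thesis using Suc.IH \<open>j = Suc j'\<close> by simp
    qed
    finally show ?thesis .
  qed
qed

lemma Vq_of_nat: "Vq q m (int s) = (\<Sum>j\<le>s. (m choose j) * (q - 1) ^ j)"
  unfolding Vq_def by simp

definition words_ball :: "nat \<Rightarrow> nat \<Rightarrow> int \<Rightarrow> nat list set" where
  "words_ball q m r = {xs \<in> words q m. int (ldist (replicate m 0) xs) \<le> r}"

lemma card_words_ball:
  assumes "q \<ge> 1"
  shows "card (words_ball q m r) = Vq q m r"
proof (cases "r < 0")
  case False
  then obtain s where r: "r = int s" by (metis nonneg_int_cases not_less)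
  have "{xs \<in> words q m. int (ldist (replicate m 0) xs) \<le> r}
      = (\<Union>j\<le>s. {xs \<in> words q m. ldist (replicate m 0) xs = j})"
    unfolding r by auto
  then show ?thesis
    unfolding words_ball_def
    by (simp add: r Vq_of_nat)
      (subst card_UN_disjoint, auto simp: finite_words card_sphere_words[OF assms])
qed (simp add: Vq_def words_ball_def)

definition fun_of_word :: "nat \<Rightarrow> nat list \<Rightarrow> nat \<Rightarrow> nat" where
  "fun_of_word n xs = (\<lambda>i. if i < n then xs ! i else undefined)"

lemma hamming_space_eq_image: "hamming_space q n = fun_of_word n ` words q n"
proof (intro set_eqI iffI)
  fix f assume "f \<in> hamming_space q n"
  then have f: "f \<in> PiE {0..<n} (\<lambda>_. {0..<q})" by (simp add: hamming_space_def)
  have "fun_of_word n (map f [0..<n]) = f"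
  proof
    fix i show "fun_of_word n (map f [0..<n]) i = f i"
      using PiE_arb[OF f, of i] by (simp add: fun_of_word_def)
  qed
  moreover have "map f [0..<n] \<in> words q n"
    using PiE_mem[OF f] by (auto simp: words_def)
  ultimately show "f \<in> fun_of_word n ` words q n" by (metis image_eqI)
next
  fix f assume "f \<in> fun_of_word n ` words q n"
  then obtain xs where "xs \<in> words q n" "f = fun_of_word n xs" by auto
  then show "f \<in> hamming_space q n"
    unfolding hamming_space_def words_def fun_of_word_def
    by (intro PiE_I) (auto simp: subset_iff in_set_conv_nth)
qed

lemma inj_on_fun_of_word: "inj_on (fun_of_word n) (words q n)"
proof
  fix xs ys assume xs: "xs \<in> words q n" and ys: "ys \<in> words q n"
    and eq: "fun_of_word n xs = fun_of_word n ys"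
  show "xs = ys"
  proof (rule nth_equalityI)
    fix i assume "i < length xs"
    then show "xs ! i = ys ! i"
      using fun_cong[OF eq, of i] xs by (simp add: words_def fun_of_word_def)
  qed (use xs ys in \<open>simp add: words_def\<close>)
qed

lemma hdist_fun_of_word:
  assumes "length xs = n" "length ys = n"
  shows "hdist n (fun_of_word n xs) (fun_of_word n ys) = ldist xs ys"
proof -
  have "{i \<in> {0..<n}. fun_of_word n xs i \<noteq> fun_of_word n ys i} = {i. i < n \<and> xs ! i \<noteq> ys ! i}"
    by (auto simp: fun_of_word_def)
  with assms show ?thesis by (simp add: hdist_def ldist_eq_card)
qed

definition ones_word :: "nat \<Rightarrow> nat \<Rightarrow> nat list" where
  "ones_word n d = replicate d 1 @ replicate (n - d) 0"

definition lens :: "nat \<Rightarrow> nat \<Rightarrow> nat \<Rightarrow> nat \<Rightarrow> nat list set" where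
  "lens q n t d = {zs \<in> words q n. ldist (replicate n 0) zs \<le> t \<and> ldist (ones_word n d) zs \<le> t}"

lemma length_ones_word [simp]: "d \<le> n \<Longrightarrow> length (ones_word n d) = n"
  by (simp add: ones_word_def)

lemma finite_lens: "finite (lens q n t d)"
  using finite_words by (simp add: lens_def)

lemma Wq_eq_card_lens:
  assumes "d \<le> n"
  shows "Wq q n t d = card (lens q n t d)"
proof -
  have zeros: "(\<lambda>i. if i < n then 0 else undefined) = fun_of_word n (replicate n 0)"
    by (auto simp: fun_of_word_def)
  have ones: "(\<lambda>i. if i < d then 1 else if i < n then 0 else undefined) = fun_of_word n (ones_word n d)"
    using assms by (auto simp: fun_of_word_def ones_word_def nth_append)
  have "hball q n (fun_of_word n (replicate n 0)) t \<inter> hball q n (fun_of_word n (ones_word n d)) t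
      = fun_of_word n ` lens q n t d"
    using assms by (auto simp: hball_def hamming_space_eq_image lens_def hdist_fun_of_word words_def)
  moreover have "inj_on (fun_of_word n) (lens q n t d)"
    by (rule inj_on_subset[OF inj_on_fun_of_word]) (auto simp: lens_def)
  ultimately show ?thesis
    unfolding Wq_def zeros ones by (simp add: card_image)
qed

lemma ones_word_Suc:
  assumes "d < n"
  shows "ones_word n (Suc d) = (ones_word n d)[d := 1]"
proof -
  obtain m where m: "n - d = Suc m" using assms by (metis Suc_diff_Suc)
  have "replicate (Suc d) (1::nat) = replicate d 1 @ [1]"
    by (simp add: replicate_append_same)
  with m show ?thesis
    by (simp add: ones_word_def list_update_append)
qed

lemma nth_ones_word_self: "d < n \<Longrightarrow> ones_word n d ! d = 0"
  by (simp add: ones_word_def nth_append)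

lemma reset_mem_lens_diff:
  assumes "d < n" "q \<ge> 1" and zs: "zs \<in> lens q n t (Suc d) - lens q n t d"
  shows "zs ! d = 1" "zs[d := 0] \<in> lens q n t d - lens q n t (Suc d)"
proof -
  let ?o = "replicate n 0" and ?y = "ones_word n d" and ?y' = "ones_word n (Suc d)"
  have len: "length zs = n" and "set zs \<subseteq> {0..<q}" using zs by (auto simp: lens_def words_def)
  then have word: "zs[d := 0] \<in> words q n"
    using assms(2) set_update_subset_insert[of zs d 0] by (auto simp: words_def)
  have dists: "ldist ?o zs \<le> t" "ldist ?y' zs \<le> t" "\<not> ldist ?y zs \<le> t"
    using zs by (auto simp: lens_def)
  have "ldist ?y' zs + (if ?y ! d = zs ! d then 0 else 1)
      = ldist ?y zs + (if 1 = zs ! d then 0 else 1)"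
    using ldist_list_update[of d ?y zs 1] assms(1) len by (simp add: ones_word_Suc)
  then have one: "zs ! d = 1" and shift: "ldist ?y zs = ldist ?y' zs + 1"
    using dists nth_ones_word_self[OF assms(1)] by (auto split: if_splits)
  show "zs ! d = 1" by (fact one)
  have reset: "ldist c (zs[d := 0]) + (if 1 = c ! d then 0 else 1)
      = ldist c zs + (if 0 = c ! d then 0 else 1)"
    if "length c = n" for c
    using ldist_list_update[of d zs c 0] assms(1) len that one by (simp add: ldist_sym[of c])
  have "?o ! d = 0" "?y ! d = 0" "?y' ! d = 1"
    using assms(1) nth_ones_word_self[OF assms(1)] by (simp_all add: ones_word_Suc)
  then show "zs[d := 0] \<in> lens q n t d - lens q n t (Suc d)"
    using reset[of ?o] reset[of ?y] reset[of ?y'] dists shift word assms(1) by (simp add: lens_def)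
qed

lemma card_lens_Suc_le:
  assumes "d < n" "q \<ge> 1"
  shows "card (lens q n t (Suc d)) \<le> card (lens q n t d)"
proof -
  let ?A = "lens q n t (Suc d)" and ?B = "lens q n t d"
  have "inj_on (\<lambda>zs. zs[d := 0]) (?A - ?B)"
  proof
    fix zs ws assume "zs \<in> ?A - ?B" "ws \<in> ?A - ?B" "zs[d := 0] = ws[d := 0]"
    then show "zs = ws"
      using reset_mem_lens_diff(1)[OF assms] by (metis list_update_id list_update_overwrite)
  qed
  then have "card (?A - ?B) \<le> card (?B - ?A)"
    using reset_mem_lens_diff(2)[OF assms] finite_lens by (intro card_inj_on_le) auto
  then show ?thesis
    using card_Int_Diff[of ?A ?B] card_Int_Diff[of ?B ?A] finite_lens by (simp add: Int_commute)
qed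

lemma card_lens_1:
  assumes "n \<ge> 1" "t \<ge> 1"
  shows "card (lens q n t 1) = q * Vq q (n - 1) (int t - 1)"
proof -
  obtain m where n: "n = Suc m" using assms(1) by (cases n) auto
  let ?B = "words_ball q m (int t - 1)"
  have "ones_word n 1 = 1 # replicate m 0" by (simp add: ones_word_def n)
  then have "lens q n t 1 = (\<lambda>(a, xs). a # xs) ` ({0..<q} \<times> ?B)"
    using assms(2) unfolding lens_def words_ball_def n words_Suc
    by (force simp: image_iff split: if_splits)
  moreover have "inj_on (\<lambda>(a, xs). a # xs) ({0..<q} \<times> ?B)"
    by (auto simp: inj_on_def)
  ultimately show ?thesis
    using card_words_ball[of q m "int t - 1"]
    by (cases "q = 0") (simp_all add: card_image card_cartesian_product n)
qed

lemma words_take_drop: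
  assumes "zs \<in> words q n" "d \<le> n"
  shows "take d zs \<in> words q d" "drop d zs \<in> words q (n - d)"
  using assms set_take_subset[of d zs] set_drop_subset[of d zs] by (auto simp: words_def)

lemma card_lens_le:
  assumes "d \<le> n"
  shows "card (lens q n t d)
    \<le> q ^ d * card {vs \<in> words q (n - d). 2 * ldist (replicate (n - d) 0) vs + d \<le> 2 * t}"
proof -
  let ?S = "{vs \<in> words q (n - d). 2 * ldist (replicate (n - d) 0) vs + d \<le> 2 * t}"
  have "lens q n t d \<subseteq> (\<lambda>(us, vs). us @ vs) ` (words q d \<times> ?S)"
  proof
    fix zs assume zs: "zs \<in> lens q n t d"
    let ?us = "take d zs" and ?vs = "drop d zs"
    have words: "?us \<in> words q d" "?vs \<in> words q (n - d)"
      using zs assms words_take_drop by (auto simp: lens_def)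
    then have len: "length ?us = d" by (simp add: words_def)
    have dist_split: "ldist (c @ replicate (n - d) 0) zs = ldist c ?us + ldist (replicate (n - d) 0) ?vs"
      if "length c = d" for c
      using ldist_append[of c ?us "replicate (n - d) 0" ?vs] len that by simp
    have "replicate n (0::nat) = replicate d 0 @ replicate (n - d) 0"
      using assms by (metis le_add_diff_inverse replicate_add)
    then have "ldist (replicate d 0) ?us + ldist (replicate (n - d) 0) ?vs \<le> t"
      "ldist (replicate d 1) ?us + ldist (replicate (n - d) 0) ?vs \<le> t"
      using zs dist_split[of "replicate d 0"] dist_split[of "replicate d 1"] by (simp_all add: lens_def ones_word_def)
    with ldist_zeros_ones_ge[OF len] have "?vs \<in> ?S"
      using words by simp
    with words(1) show "zs \<in> (\<lambda>(us, vs). us @ vs) ` (words q d \<times> ?S)"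
      by (intro image_eqI[of _ _ "(?us, ?vs)"]) auto
  qed
  then have "card (lens q n t d) \<le> card ((\<lambda>(us, vs). us @ vs) ` (words q d \<times> ?S))"
    by (intro card_mono finite_imageI) (simp_all add: finite_words)
  also have "\<dots> \<le> card (words q d \<times> ?S)"
    by (intro card_image_le) (simp add: finite_words)
  finally show ?thesis
    by (simp add: card_cartesian_product card_words)
qed

lemma card_lens_odd_le:
  assumes "2 * k + 1 \<le> n"
  shows "card (lens q n t (2 * k + 1)) \<le> q ^ (2 * k + 1) * Vq q (n - (2 * k + 1)) (int t - int k - 1)"
proof (cases "q = 0")
  case False
  have "{vs \<in> words q (n - (2 * k + 1)). 2 * ldist (replicate (n - (2 * k + 1)) 0) vs + (2 * k + 1) \<le> 2 * t}
      = words_ball q (n - (2 * k + 1)) (int t - int k - 1)"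
    by (auto simp: words_ball_def)
  with card_lens_le[OF assms, of q t] card_words_ball[of q] False show ?thesis
    by simp
qed (use card_lens_le[OF assms, of 0 t] in simp)

lemma Suc_times_choose_Suc: "Suc k * (m choose Suc k) = (m - k) * (m choose k)"
  using binomial_absorption[of k m] binomial_absorb_comp[of m k] by simp

lemma choose_times_power_mono:
  assumes "A \<le> B"
  shows "(A choose k) * (B + 1) ^ k \<le> (A + 1) ^ k * (B choose k)"
proof (induction k)
  case (Suc k)
  have step: "(A - k) * (B + 1) \<le> (A + 1) * (B - k)"
  proof (cases "k \<le> A")
    case True
    then obtain a b where "A = k + a" "B = k + a + b"
      using assms by (metis le_add_diff_inverse)
    then show ?thesis by (simp add: algebra_simps)
  qed simp
  have "Suc k * ((A choose Suc k) * (B + 1) ^ Suc k) = (Suc k * (A choose Suc k)) * (B + 1) ^ Suc k"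
    by (simp only: mult.assoc)
  also have "\<dots> = ((A - k) * (B + 1)) * ((A choose k) * (B + 1) ^ k)"
    by (simp only: Suc_times_choose_Suc power_Suc mult_ac)
  also have "\<dots> \<le> ((A + 1) * (B - k)) * ((A + 1) ^ k * (B choose k))"
    by (rule mult_le_mono[OF step Suc.IH])
  also have "\<dots> = (A + 1) ^ Suc k * ((B - k) * (B choose k))"
    by (simp only: power_Suc mult_ac)
  also have "\<dots> = (A + 1) ^ Suc k * (Suc k * (B choose Suc k))"
    by (simp only: Suc_times_choose_Suc)
  also have "\<dots> = Suc k * ((A + 1) ^ Suc k * (B choose Suc k))"
    by (simp only: mult_ac)
  finally show ?case by (simp only: mult_le_cancel1)
qed simp

lemma choose_shift_times_power_le:
  assumes "j + k < t" "n \<ge> 1" "k \<le> n - 1"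
  shows "((n - 1 - k) choose j) * n ^ k \<le> t ^ k * ((n - 1) choose (j + k))"
proof (cases "j + k \<le> n - 1")
  case False
  then show ?thesis using assms(3) by (simp add: binomial_eq_0)
next
  case True
  let ?N = "n - 1" and ?a = "min t n"
  have "((j + k) choose k) * n ^ k \<le> ((?a - 1) choose k) * n ^ k"
    using assms True by (intro mult_right_mono binomial_right_mono) auto
  also have "\<dots> \<le> ?a ^ k * (?N choose k)"
    using choose_times_power_mono[of "?a - 1" "n - 1" k] assms by simp
  also have "\<dots> \<le> t ^ k * (?N choose k)"
    by (intro mult_right_mono power_mono) auto
  finally have "((j + k) choose k) * n ^ k \<le> t ^ k * (?N choose k)" .
  then have "((?N - k) choose j) * n ^ k * ((j + k) choose k)
      \<le> ((?N - k) choose j) * (t ^ k * (?N choose k))"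
    using mult_le_mono1 by (metis mult.assoc mult.commute)
  also have "\<dots> = t ^ k * (?N choose (j + k)) * ((j + k) choose k)"
    using choose_mult[of k "j + k" ?N] True by (simp add: algebra_simps)
  finally show ?thesis by simp
qed

lemma Vq_shift_le:
  assumes "2 * k + 2 \<le> n"
  shows "Vq q (n - (2 * k + 1)) (int t - int k - 1) * ((q - 1) * n) ^ k \<le> t ^ k * Vq q (n - 1) (int t - 1)"
proof (cases "k < t")
  case True
  let ?f = "\<lambda>i. t ^ k * (((n - 1) choose i) * (q - 1) ^ i)"
  have r: "int t - int k - 1 = int (t - k - 1)" "int t - 1 = int (t - 1)" using True by auto
  have "Vq q (n - (2 * k + 1)) (int t - int k - 1) * ((q - 1) * n) ^ k
      = (\<Sum>j\<le>t - k - 1. ((n - (2 * k + 1)) choose j) * n ^ k * (q - 1) ^ (j + k))"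
    unfolding r Vq_of_nat sum_distrib_right by (simp add: power_add power_mult_distrib mult_ac)
  also have "\<dots> \<le> (\<Sum>j\<le>t - k - 1. ?f (j + k))"
  proof (rule sum_mono)
    fix j assume j: "j \<in> {..t - k - 1}"
    have "((n - (2 * k + 1)) choose j) * n ^ k \<le> ((n - 1 - k) choose j) * n ^ k"
      by (intro mult_right_mono binomial_right_mono) auto
    also have "\<dots> \<le> t ^ k * ((n - 1) choose (j + k))"
      using j assms True by (intro choose_shift_times_power_le) auto
    finally show "((n - (2 * k + 1)) choose j) * n ^ k * (q - 1) ^ (j + k) \<le> ?f (j + k)"
      by (simp add: mult.assoc)
  qed
  also have "\<dots> = sum ?f ((\<lambda>j. j + k) ` {..t - k - 1})"
    by (subst sum.reindex) (auto simp: inj_on_def)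
  also have "\<dots> \<le> sum ?f {..t - 1}"
    using True by (intro sum_mono2) auto
  also have "\<dots> = t ^ k * Vq q (n - 1) (int t - 1)"
    unfolding r Vq_of_nat by (simp add: sum_distrib_left)
  finally show ?thesis .
qed (simp add: Vq_def)

lemma Vq_pred_le:
  "(q - 1) * n * Vq q (n - 1) (int t - 1) \<le> t * Vq q n (int t)"
proof (cases "t = 0 \<or> n = 0")
  case False
  let ?g = "\<lambda>i. t * ((n choose i) * (q - 1) ^ i)"
  have r: "int t - 1 = int (t - 1)" using False by auto
  have "(q - 1) * n * Vq q (n - 1) (int t - 1)
      = (\<Sum>j\<le>t - 1. (n * ((n - 1) choose j)) * (q - 1) ^ Suc j)"
    unfolding r Vq_of_nat sum_distrib_left by (simp add: mult_ac)
  also have "\<dots> = (\<Sum>j\<le>t - 1. (Suc j * (n choose Suc j)) * (q - 1) ^ Suc j)"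
    by (simp only: binomial_absorption)
  also have "\<dots> \<le> (\<Sum>j\<le>t - 1. ?g (Suc j))"
  proof (rule sum_mono)
    fix j assume "j \<in> {..t - 1}"
    then have "Suc j * (n choose Suc j) \<le> t * (n choose Suc j)"
      using False by (intro mult_le_mono1) auto
    then show "(Suc j * (n choose Suc j)) * (q - 1) ^ Suc j \<le> ?g (Suc j)"
      by (metis mult_le_mono1 mult.assoc)
  qed
  also have "\<dots> \<le> ?g 0 + (\<Sum>j\<le>t - 1. ?g (Suc j))" by simp
  also have "\<dots> = (\<Sum>i\<le>Suc (t - 1). ?g i)" by (rule sum.atMost_Suc_shift[symmetric])
  also have "\<dots> = t * Vq q n (int t)" using False by (simp add: Vq_of_nat sum_distrib_left)
  finally show ?thesis .
qed (elim disjE; simp add: Vq_def)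

lemma Wq_Suc_le:
  assumes "d < n" "q \<ge> 1"
  shows "Wq q n t (Suc d) \<le> Wq q n t d"
  using card_lens_Suc_le[OF assms] assms(1) by (simp add: Wq_eq_card_lens)

lemma Wq_1_eq:
  assumes "n \<ge> 1" "t \<ge> 1"
  shows "Wq q n t 1 = q * Vq q (n - 1) (int t - 1)"
  using card_lens_1[OF assms] assms(1) by (simp add: Wq_eq_card_lens)

lemma Wq_odd_times_power_le:
  assumes "2 * k + 2 \<le> n" "t \<ge> 1"
  shows "Wq q n t (2 * k + 1) * ((q - 1) * n) ^ k \<le> (q ^ 2 * t) ^ k * Wq q n t 1"
proof -
  have W1: "Wq q n t 1 = q * Vq q (n - 1) (int t - 1)"
    using assms by (intro Wq_1_eq) auto
  have "Wq q n t (2 * k + 1) * ((q - 1) * n) ^ k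
      \<le> q ^ (2 * k + 1) * (Vq q (n - (2 * k + 1)) (int t - int k - 1) * ((q - 1) * n) ^ k)"
    using card_lens_odd_le[of k n q t] assms(1) by (simp add: Wq_eq_card_lens)
  also have "\<dots> \<le> q ^ (2 * k + 1) * (t ^ k * Vq q (n - 1) (int t - 1))"
    using Vq_shift_le[OF assms(1)] by simp
  also have "\<dots> = (q ^ 2 * t) ^ k * Wq q n t 1"
    unfolding W1 by (simp add: power_add power_mult[symmetric] power_mult_distrib mult_ac)
  finally show ?thesis .
qed

lemma Wq_1_times_le:
  assumes "n \<ge> 1" "t \<ge> 1"
  shows "Wq q n t 1 * ((q - 1) * n) \<le> (q ^ 2 * t) * Vq q n (int t)"
proof -
  have "Wq q n t 1 * ((q - 1) * n) = q * ((q - 1) * n * Vq q (n - 1) (int t - 1))"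
    unfolding Wq_1_eq[OF assms] by (simp add: mult_ac)
  also have "\<dots> \<le> q * (t * Vq q n (int t))"
    using Vq_pred_le by simp
  also have "\<dots> \<le> (q ^ 2 * t) * Vq q n (int t)"
    by (simp add: power2_eq_square)
  finally show ?thesis .
qed

lemma of_nat_le_ratio_power_times:
  fixes a b c d :: nat
  assumes "d > 0" "a * d ^ k \<le> c ^ k * b"
  shows "real a \<le> (real c / real d) ^ k * real b"
proof -
  have "real a * real d ^ k \<le> real c ^ k * real b"
    using assms(2) by (metis of_nat_le_iff of_nat_mult of_nat_power)
  with assms(1) show ?thesis
    by (simp add: power_divide pos_le_divide_eq)
qed

theorem lemma3p4:
  fixes q n t k :: nat
  assumes "q \<ge> 2" and "n > 0" and "t > 0"
    and "real t \<le> 10 * sqrt (real n)"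
    and "2 * k + 2 \<le> n"
  shows "Wq q n t (2*k+2) \<le> Wq q n t (2*k+1)
    \<and> real (Wq q n t (2*k+1)) \<le> 2 * (real (q^2) * real t / (real (q - 1) * real n)) ^ k * real (Wq q n t 1)
    \<and> 2 * (real (q^2) * real t / (real (q - 1) * real n)) ^ k * real (Wq q n t 1)
        \<le> 2 * (real (q^2) * real t / (real (q - 1) * real n)) ^ (k+1) * real (Vq q n (int t))"
proof -
  define R where "R = real (q^2) * real t / (real (q - 1) * real n)"
  have R: "R = real (q ^ 2 * t) / real ((q - 1) * n)" and "R \<ge> 0"
    unfolding R_def by simp_all
  have pos: "(q - 1) * n > 0" and n1: "n \<ge> 1" and t1: "t \<ge> 1" using assms by simp_all
  have odd: "real (Wq q n t (2*k+1)) \<le> R ^ k * real (Wq q n t 1)"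
    unfolding R by (rule of_nat_le_ratio_power_times[OF pos Wq_odd_times_power_le[OF assms(5) t1]])
  have "real (Wq q n t 1) \<le> R ^ 1 * real (Vq q n (int t))"
    unfolding R by (rule of_nat_le_ratio_power_times[OF pos]) (use Wq_1_times_le[OF n1 t1] in simp)
  then have one: "real (Wq q n t 1) \<le> R * real (Vq q n (int t))" by simp
  have "Wq q n t (2*k+2) \<le> Wq q n t (2*k+1)"
    using Wq_Suc_le[of "2*k+1" n q t] assms(1,5) by simp
  moreover have "real (Wq q n t (2*k+1)) \<le> 2 * R ^ k * real (Wq q n t 1)"
    using odd mult_nonneg_nonneg[OF zero_le_power[OF \<open>R \<ge> 0\<close>] of_nat_0_le_iff] by linarith
  moreover have "2 * R ^ k * real (Wq q n t 1) \<le> 2 * R ^ (k+1) * real (Vq q n (int t))"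
    using mult_left_mono[OF one, of "2 * R ^ k"] \<open>R \<ge> 0\<close> by (simp add: mult.left_commute)
  ultimately show ?thesis
    unfolding R_def[symmetric] by blast
qed

end
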